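(* If $T\in\mathcal{O}_H'(\mathbb{R}^d)$, then for every $\varphi\in\mathcal{D}(\mathbb{R}^d)$ the function $y\mapsto T_x(\varphi(xy))$, $y\in\mathbb{R}_*^d$, extends to a function in $C^\infty(\mathbb{R}^d)$.
   Context: $\mathbb{R}_*=\mathbb{R}\setminus\{0\}$; $xy$ is the coordinatewise product (for $y\in\mathbb{R}_*^d$, $x\mapsto\varphi(xy)$ has compact support). Euler derivatives: $\theta_j=x_j\partial_j$, $\theta^\beta=\theta_1^{\beta_1}\cdots\theta_d^{\beta_d}$. $\mathcal{O}_H'(\mathbb{R}^d)$ is the set of $T\in\mathcal{D}'(\mathbb{R}^d)$ such that for every $k\in\mathbb{N}_0$ there are finitely many measurable functions $t_\beta$ with $(1+|x|^2)^{k/2}t_\beta\in L_\infty(\mathbb{R}^d)$ and $T=\sum_\beta\theta^\beta t_\beta$ in the sense of distributions. *)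

theory Defs
  imports "HOL-Analysis.Analysis"
begin

text \<open>Functions on R^d are modelled on the type real^'d ('d a finite index type);
 the coordinatewise product x*y is the product of the vec type.\<close>

definition partial :: "'d::finite \<Rightarrow> (real^'d \<Rightarrow> complex) \<Rightarrow> real^'d \<Rightarrow> complex" where
  "partial j f x = vector_derivative (\<lambda>t. f (x + t *\<^sub>R axis j 1)) (at 0)"

definition pderivs :: "'d::finite list \<Rightarrow> (real^'d \<Rightarrow> complex) \<Rightarrow> real^'d \<Rightarrow> complex" where
  "pderivs js f = foldr partial js f"

definition smooth_fun :: "(real^'d::finite \<Rightarrow> complex) \<Rightarrow> bool" where
  "smooth_fun f \<longleftrightarrow> (\<forall>js::'d list. continuous_on UNIV (pderivs js f) \<and>
      (\<forall>j x. (\<lambda>t::real. pderivs js f (x + t *\<^sub>R axis j 1)) differentiable (at 0)))"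

definition test_fun :: "(real^'d::finite \<Rightarrow> complex) \<Rightarrow> bool" where
  "test_fun \<phi> \<longleftrightarrow> smooth_fun \<phi> \<and> compact (closure {x. \<phi> x \<noteq> 0})"

definition test_conv :: "(nat \<Rightarrow> real^'d::finite \<Rightarrow> complex) \<Rightarrow> (real^'d \<Rightarrow> complex) \<Rightarrow> bool" where
  "test_conv \<phi>s \<phi> \<longleftrightarrow> (\<forall>n. test_fun (\<phi>s n)) \<and> test_fun \<phi> \<and>
     (\<exists>K. compact K \<and> (\<forall>n. {x. \<phi>s n x \<noteq> 0} \<subseteq> K)) \<and>
     (\<forall>js::'d list. uniform_limit UNIV (\<lambda>n. pderivs js (\<phi>s n)) (pderivs js \<phi>) sequentially)"

text \<open>A distribution: a (sequentially) continuous linear functional on D(R^d);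
 only its values on test functions are relevant.\<close>
definition distribution :: "((real^'d::finite \<Rightarrow> complex) \<Rightarrow> complex) \<Rightarrow> bool" where
  "distribution T \<longleftrightarrow>
     (\<forall>\<phi> \<psi> a b. test_fun \<phi> \<longrightarrow> test_fun \<psi> \<longrightarrow>
        T (\<lambda>x. a * \<phi> x + b * \<psi> x) = a * T \<phi> + b * T \<psi>) \<and>
     (\<forall>\<phi>s \<phi>. test_conv \<phi>s \<phi> \<longrightarrow> (\<lambda>n. T (\<phi>s n)) \<longlonglongrightarrow> T \<phi>)"

text \<open>Transpose of the Euler derivative theta_j = x_j d_j: psi \<mapsto> - d_j (x_j psi).\<close>
definition euler_t :: "'d::finite \<Rightarrow> (real^'d \<Rightarrow> complex) \<Rightarrow> real^'d \<Rightarrow> complex" where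
  "euler_t j \<psi> = (\<lambda>x. - partial j (\<lambda>z. complex_of_real (z $ j) * \<psi> z) x)"

text \<open>theta^js = theta_j1 o ... o theta_jm; its transpose applies the transposes in reverse order.\<close>
definition euler_transpose :: "'d::finite list \<Rightarrow> (real^'d \<Rightarrow> complex) \<Rightarrow> real^'d \<Rightarrow> complex" where
  "euler_transpose js \<psi> = foldr euler_t (rev js) \<psi>"

text \<open>O_H'(R^d): T = sum theta^beta t_beta in the distributional sense, for every k,
 with measurable t_beta such that (1+|x|^2)^(k/2) t_beta is essentially bounded.\<close>
definition OH' :: "((real^'d::finite \<Rightarrow> complex) \<Rightarrow> complex) \<Rightarrow> bool" where
  "OH' T \<longleftrightarrow> distribution T \<and>
     (\<forall>k::nat. \<exists>ts :: ('d list \<times> (real^'d \<Rightarrow> complex)) list.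
        (\<forall>(js, t) \<in> set ts. t \<in> borel_measurable lebesgue \<and>
            (\<exists>C. AE x in lebesgue. (1 + (norm x)^2) powr (real k / 2) * cmod (t x) \<le> C)) \<and>
        (\<forall>\<phi>. test_fun \<phi> \<longrightarrow>
            T \<phi> = (\<Sum>(js, t) \<leftarrow> ts. LINT x|lebesgue. t x * euler_transpose js \<phi> x)))"

end

theory Submission
  imports Defs "HOL-Probability.Sinc_Integral"
begin

text \<open>Fix k and write T = \<Sum> \<theta>^b t_b with (1 + |x|^2)^(k/2) t_b bounded. The transposed
  Euler operators commute with dilations, so for y in R_*^d the value T(\<phi>(\<cdot> y)) is a finite sum of
  integrals J(y) = \<integral> w(x) \<psi>(x y) dx with test functions \<psi>, and these make sense for every y in R^d.
  Differentiating under the integral, \<partial>_j J = \<integral> x_j w(x) (\<partial>_j \<psi>)(x y) dx, which costs one order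
  of decay of the weight w; so the extension obtained from k is of class C^(k-d-1). The extensions
  for different k are continuous and agree on the dense set R_*^d, hence they coincide, and the
  common extension is smooth.\<close>

section \<open>Partial derivatives and smooth functions\<close>

definition axis_differentiable :: "(real^'d::finite \<Rightarrow> complex) \<Rightarrow> bool" where
  "axis_differentiable f \<longleftrightarrow> (\<forall>j x. (\<lambda>t::real. f (x + t *\<^sub>R axis j 1)) differentiable (at 0))"

lemma has_vector_derivative_iff_difference_quotient:
  fixes f :: "real \<Rightarrow> 'a::real_normed_vector"
  shows "(f has_vector_derivative D) (at 0) \<longleftrightarrow> ((\<lambda>t. (f t - f 0) /\<^sub>R t) \<longlongrightarrow> D) (at 0)"
proof -
  have "(f has_vector_derivative D) (at 0) \<longleftrightarrow>
     ((\<lambda>h. norm (f (0 + h) - f 0 - h *\<^sub>R D) / norm h) \<longlongrightarrow> 0) (at 0)"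
    unfolding has_vector_derivative_def has_derivative_at
    by (simp add: bounded_linear_scaleR_left)
  also have "\<dots> \<longleftrightarrow> ((\<lambda>h. norm ((f h - f 0) /\<^sub>R h - D)) \<longlongrightarrow> 0) (at 0)"
  proof (rule filterlim_cong[OF refl refl])
    have "norm (f (0 + h) - f 0 - h *\<^sub>R D) / norm h = norm ((f h - f 0) /\<^sub>R h - D)"
      if "h \<noteq> 0" for h
    proof -
      have "(f h - f 0) /\<^sub>R h - D = inverse h *\<^sub>R (f h - f 0 - h *\<^sub>R D)"
        using that by (simp add: scaleR_diff_right)
      then show ?thesis
        by (simp add: divide_inverse abs_inverse mult.commute)
    qed
    then show "\<forall>\<^sub>F h in at 0. norm (f (0 + h) - f 0 - h *\<^sub>R D) / norm h = norm ((f h - f 0) /\<^sub>R h - D)"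
      by (simp add: eventually_at_filter)
  qed
  also have "\<dots> \<longleftrightarrow> ((\<lambda>t. (f t - f 0) /\<^sub>R t) \<longlongrightarrow> D) (at 0)"
    by (simp add: tendsto_norm_zero_iff LIM_zero_iff)
  finally show ?thesis .
qed

lemma pderivs_Nil [simp]: "pderivs [] f = f"
  by (simp add: pderivs_def)

lemma pderivs_Cons: "pderivs (j # js) f = partial j (pderivs js f)"
  by (simp add: pderivs_def)

lemma pderivs_append_single: "pderivs (js @ [j]) f = pderivs js (partial j f)"
  by (simp add: pderivs_def)

lemma partial_eqI:
  "((\<lambda>t. f (x + t *\<^sub>R axis j 1)) has_vector_derivative D) (at 0) \<Longrightarrow> partial j f x = D"
  unfolding partial_def by (rule vector_derivative_at)

lemma has_vector_derivative_partial:
  "axis_differentiable f \<Longrightarrow>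
     ((\<lambda>t. f (x + t *\<^sub>R axis j 1)) has_vector_derivative partial j f x) (at 0)"
  unfolding axis_differentiable_def partial_def using vector_derivative_works by blast

lemma has_vector_derivative_partial_at:
  assumes "axis_differentiable f"
  shows "((\<lambda>t. f (x + t *\<^sub>R axis j 1)) has_vector_derivative partial j f (x + s *\<^sub>R axis j 1)) (at s)"
proof -
  have "((\<lambda>t::real. t - s) has_vector_derivative 1) (at s)"
    by (auto intro!: derivative_eq_intros)
  moreover have "((\<lambda>u. f ((x + s *\<^sub>R axis j 1) + u *\<^sub>R axis j 1)) has_vector_derivative
          partial j f (x + s *\<^sub>R axis j 1)) (at ((\<lambda>t. t - s) s))"
    using has_vector_derivative_partial[OF assms] by simp
  moreover have "(\<lambda>u. f ((x + s *\<^sub>R axis j 1) + u *\<^sub>R axis j 1)) \<circ> (\<lambda>t. t - s) =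
      (\<lambda>t. f (x + t *\<^sub>R axis j 1))"
    by (auto simp: fun_eq_iff algebra_simps)
  ultimately show ?thesis
    using vector_diff_chain_at by fastforce
qed

lemma norm_axis_increment_le:
  assumes "axis_differentiable f" "\<And>z. cmod (partial j f z) \<le> B"
  shows "cmod (f (z + t *\<^sub>R axis j 1) - f z) \<le> B * \<bar>t\<bar>"
proof -
  have "norm ((\<lambda>\<sigma>. f (z + \<sigma> *\<^sub>R axis j 1)) t - (\<lambda>\<sigma>. f (z + \<sigma> *\<^sub>R axis j 1)) 0) \<le> B * norm (t - 0)"
  proof (rule differentiable_bound[of UNIV _ "\<lambda>\<sigma> h. h *\<^sub>R partial j f (z + \<sigma> *\<^sub>R axis j 1)"])
    fix \<sigma> :: real
    show "((\<lambda>\<sigma>. f (z + \<sigma> *\<^sub>R axis j 1)) has_derivative (\<lambda>h. h *\<^sub>R partial j f (z + \<sigma> *\<^sub>R axis j 1)))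
        (at \<sigma> within UNIV)"
      using has_vector_derivative_partial_at[OF assms(1), of z j \<sigma>]
      by (simp add: has_vector_derivative_def)
    show "onorm (\<lambda>h::real. h *\<^sub>R partial j f (z + \<sigma> *\<^sub>R axis j 1)) \<le> B"
      using assms(2) by (simp add: onorm_scaleR_left[OF bounded_linear_ident] onorm_id)
  qed auto
  then show ?thesis by simp
qed

lemma smooth_funI_coinduct:
  assumes "f \<in> S"
    and closed: "\<And>g. g \<in> S \<Longrightarrow> continuous_on UNIV g \<and> axis_differentiable g \<and> (\<forall>j. partial j g \<in> S)"
  shows "smooth_fun f"
proof -
  have "\<forall>g\<in>S. pderivs js g \<in> S" for js
    by (induction js rule: rev_induct) (simp_all add: pderivs_append_single closed)
  then show ?thesis
    using assms unfolding smooth_fun_def axis_differentiable_def by blast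
qed

lemma smooth_fun_continuous: "smooth_fun f \<Longrightarrow> continuous_on UNIV f"
  unfolding smooth_fun_def by (metis pderivs_Nil)

lemma smooth_fun_axis_differentiable: "smooth_fun f \<Longrightarrow> axis_differentiable f"
  unfolding smooth_fun_def axis_differentiable_def by (metis pderivs_Nil)

lemma smooth_fun_partial: "smooth_fun f \<Longrightarrow> smooth_fun (partial j f)"
  unfolding smooth_fun_def by (metis pderivs_append_single)

lemma partial_linear_combination:
  assumes "axis_differentiable f" "axis_differentiable g"
  shows "partial j (\<lambda>x. a * f x + b * g x) = (\<lambda>x. a * partial j f x + b * partial j g x)"
  by (rule ext, rule partial_eqI)
     (auto intro!: derivative_eq_intros has_vector_derivative_partial assms)

lemma axis_differentiable_linear_combination:
  assumes "axis_differentiable f" "axis_differentiable g"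
  shows "axis_differentiable (\<lambda>x. a * f x + b * g x)"
  unfolding axis_differentiable_def
  by (auto intro!: differentiableI_vector derivative_eq_intros has_vector_derivative_partial assms)

lemma smooth_fun_linear_combination:
  assumes "smooth_fun f" "smooth_fun g"
  shows "smooth_fun (\<lambda>x. a * f x + b * g x)"
proof (rule smooth_funI_coinduct[where S = "{h. \<exists>a b f g. smooth_fun f \<and> smooth_fun g \<and> h = (\<lambda>x. a * f x + b * g x)}"])
  fix h assume "h \<in> {h. \<exists>a b f g. smooth_fun f \<and> smooth_fun g \<and> h = (\<lambda>x. a * f x + b * g x)}"
  then obtain a b f g where fg: "smooth_fun f" "smooth_fun g" and h: "h = (\<lambda>x. a * f x + b * g x)"
    by blast
  have "continuous_on UNIV h"
    unfolding h using smooth_fun_continuous[OF fg(1)] smooth_fun_continuous[OF fg(2)]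
    by (intro continuous_intros)
  moreover have "axis_differentiable h"
    unfolding h using fg by (intro axis_differentiable_linear_combination smooth_fun_axis_differentiable)
  moreover have "partial j h = (\<lambda>x. a * partial j f x + b * partial j g x)" for j
    unfolding h using fg by (intro partial_linear_combination smooth_fun_axis_differentiable)
  ultimately show "continuous_on UNIV h \<and> axis_differentiable h \<and>
      (\<forall>j. partial j h \<in> {h. \<exists>a b f g. smooth_fun f \<and> smooth_fun g \<and> h = (\<lambda>x. a * f x + b * g x)})"
    using fg smooth_fun_partial by blast
qed (use assms in blast)

lemma smooth_fun_cmult: "smooth_fun f \<Longrightarrow> smooth_fun (\<lambda>x. c * f x)"
  using smooth_fun_linear_combination[of f f c 0] by simp

lemma smooth_fun_add: "smooth_fun f \<Longrightarrow> smooth_fun g \<Longrightarrow> smooth_fun (\<lambda>x. f x + g x)"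
  using smooth_fun_linear_combination[of f g 1 1] by simp

lemma smooth_fun_minus: "smooth_fun f \<Longrightarrow> smooth_fun (\<lambda>x. - f x)"
  using smooth_fun_cmult[of f "-1"] by simp

lemma has_vector_derivative_coord_mult:
  assumes "axis_differentiable f"
  shows "((\<lambda>t. of_real ((x + t *\<^sub>R axis j 1) $ k) * f (x + t *\<^sub>R axis j 1)) has_vector_derivative
     (of_real (x $ k) * partial j f x + (if j = k then f x else 0))) (at 0)"
proof -
  have "((\<lambda>t. of_real ((x + t *\<^sub>R axis j 1) $ k) :: complex) has_vector_derivative
          (if j = k then 1 else 0)) (at 0)"
    by (cases "j = k") (auto simp: axis_def intro!: derivative_eq_intros)
  from has_vector_derivative_mult[OF this has_vector_derivative_partial[OF assms]]
  have "((\<lambda>t. of_real ((x + t *\<^sub>R axis j 1) $ k) * f (x + t *\<^sub>R axis j 1)) has_vector_derivative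
     (of_real ((x + 0 *\<^sub>R axis j 1) $ k) * partial j f x +
      (if j = k then 1 else 0) * f (x + 0 *\<^sub>R axis j 1))) (at 0)" .
  moreover have "(if j = k then 1 else 0) * f x = (if j = k then f x else 0)"
    by simp
  ultimately show ?thesis
    by (simp only: scale_zero_left add_0_right)
qed

lemma partial_coord_mult:
  assumes "axis_differentiable f"
  shows "partial j (\<lambda>z. of_real (z $ k) * f z) =
    (\<lambda>x. of_real (x $ k) * partial j f x + (if j = k then f x else 0))"
  by (rule ext, rule partial_eqI, rule has_vector_derivative_coord_mult[OF assms])

lemma axis_differentiable_coord_mult:
  assumes "axis_differentiable f"
  shows "axis_differentiable (\<lambda>z. of_real (z $ k) * f z)"
  unfolding axis_differentiable_def
  using has_vector_derivative_coord_mult[OF assms] differentiableI_vector by blast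

text \<open>By the product rule the class of functions f + x_k g with f, g smooth is closed under
  partial derivatives.\<close>
lemma smooth_fun_coord_mult:
  assumes "smooth_fun g"
  shows "smooth_fun (\<lambda>x. of_real (x $ k) * g x)"
proof (rule smooth_funI_coinduct[where S = "{h. \<exists>f g. smooth_fun f \<and> smooth_fun g \<and> h = (\<lambda>x. f x + of_real (x $ k) * g x)}"])
  show "(\<lambda>x. of_real (x $ k) * g x) \<in> {h. \<exists>f g. smooth_fun f \<and> smooth_fun g \<and> h = (\<lambda>x. f x + of_real (x $ k) * g x)}"
    using assms smooth_fun_cmult[OF assms, of 0] by force
next
  fix h assume "h \<in> {h. \<exists>f g. smooth_fun f \<and> smooth_fun g \<and> h = (\<lambda>x. f x + of_real (x $ k) * g x)}"
  then obtain f g where fg: "smooth_fun f" "smooth_fun g" and h: "h = (\<lambda>x. f x + of_real (x $ k) * g x)"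
    by blast
  have f': "axis_differentiable f" and g': "axis_differentiable (\<lambda>x. of_real (x $ k) * g x)"
    using fg by (simp_all add: smooth_fun_axis_differentiable axis_differentiable_coord_mult)
  have "continuous_on UNIV h"
    unfolding h using smooth_fun_continuous[OF fg(1)] smooth_fun_continuous[OF fg(2)]
    by (intro continuous_intros)
  moreover have "axis_differentiable h"
    unfolding h using axis_differentiable_linear_combination[OF f' g', of 1 1] by simp
  moreover have "partial j h =
      (\<lambda>x. (partial j f x + (if j = k then 1 else 0) * g x) + of_real (x $ k) * partial j g x)" for j
    using partial_linear_combination[OF f' g', of j 1 1] fg(2)
    by (simp add: h partial_coord_mult smooth_fun_axis_differentiable fun_eq_iff)
  moreover have "smooth_fun (\<lambda>x. partial j f x + (if j = k then 1 else 0) * g x)" for j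
    using smooth_fun_linear_combination[OF smooth_fun_partial[OF fg(1), of j] fg(2),
        of 1 "if j = k then 1 else 0"] by simp
  ultimately show "continuous_on UNIV h \<and> axis_differentiable h \<and>
      (\<forall>j. partial j h \<in> {h. \<exists>f g. smooth_fun f \<and> smooth_fun g \<and> h = (\<lambda>x. f x + of_real (x $ k) * g x)})"
    using smooth_fun_partial[OF fg(2)] by blast
qed

lemma euler_t_eq:
  "axis_differentiable f \<Longrightarrow> euler_t j f = (\<lambda>x. - (of_real (x $ j) * partial j f x + f x))"
  unfolding euler_t_def by (simp add: partial_coord_mult)

lemma smooth_fun_euler_t:
  assumes "smooth_fun f"
  shows "smooth_fun (euler_t j f)"
proof -
  have "smooth_fun (\<lambda>x. - (of_real (x $ j) * partial j f x + f x))"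
    by (intro smooth_fun_minus smooth_fun_add smooth_fun_coord_mult smooth_fun_partial assms)
  then show ?thesis
    by (simp only: euler_t_eq[OF smooth_fun_axis_differentiable[OF assms]])
qed

lemma smooth_fun_foldr_euler_t: "smooth_fun f \<Longrightarrow> smooth_fun (foldr euler_t js f)"
  by (induction js) (simp_all add: smooth_fun_euler_t)

section \<open>Dilations\<close>

lemma continuous_on_vec_mult_right: "continuous_on UNIV (\<lambda>x::real^'d::finite. x * y)"
proof -
  have e: "(\<lambda>x::real^'d. x * y) = (\<lambda>x. \<chi> i. x $ i * y $ i)"
    by (simp add: vec_eq_iff fun_eq_iff)
  show ?thesis
    unfolding e by (intro continuous_intros)
qed

lemma axis_increment_mult: "(x + t *\<^sub>R axis j 1) * y = x * y + (t * y $ j) *\<^sub>R axis j (1::real)"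
  by (simp add: vec_eq_iff axis_def algebra_simps)

lemma has_vector_derivative_dilation:
  assumes "axis_differentiable f"
  shows "((\<lambda>t. f ((x + t *\<^sub>R axis j 1) * y)) has_vector_derivative
           of_real (y $ j) * partial j f (x * y)) (at 0)"
proof -
  have "((\<lambda>t::real. t * y $ j) has_vector_derivative y $ j) (at 0)"
    by (auto intro!: derivative_eq_intros)
  moreover have "((\<lambda>u. f (x * y + u *\<^sub>R axis j 1)) has_vector_derivative partial j f (x * y))
          (at ((\<lambda>t. t * y $ j) 0))"
    using has_vector_derivative_partial[OF assms] by simp
  moreover have "(\<lambda>u. f (x * y + u *\<^sub>R axis j 1)) \<circ> (\<lambda>t. t * y $ j) = (\<lambda>t. f ((x + t *\<^sub>R axis j 1) * y))"
    by (simp add: o_def axis_increment_mult)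
  ultimately show ?thesis
    using vector_diff_chain_at by (fastforce simp: scaleR_conv_of_real)
qed

lemma partial_dilation:
  "axis_differentiable f \<Longrightarrow>
     partial j (\<lambda>x. f (x * y)) = (\<lambda>x. of_real (y $ j) * partial j f (x * y))"
  by (rule ext, rule partial_eqI, rule has_vector_derivative_dilation)

lemma smooth_fun_dilation:
  assumes "smooth_fun g"
  shows "smooth_fun (\<lambda>x. g (x * y))"
proof (rule smooth_funI_coinduct[where S = "{h. \<exists>f. smooth_fun f \<and> h = (\<lambda>x. f (x * y))}"])
  fix h assume "h \<in> {h. \<exists>f. smooth_fun f \<and> h = (\<lambda>x. f (x * y))}"
  then obtain f where f: "smooth_fun f" and h: "h = (\<lambda>x. f (x * y))" by blast
  have "continuous_on UNIV h"
    unfolding h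
    by (rule continuous_on_compose2[OF smooth_fun_continuous[OF f] continuous_on_vec_mult_right]) auto
  moreover have "axis_differentiable h"
    unfolding h axis_differentiable_def
    by (intro allI differentiableI_vector[OF has_vector_derivative_dilation[OF smooth_fun_axis_differentiable[OF f]]])
  moreover have "partial j h \<in> {h. \<exists>f. smooth_fun f \<and> h = (\<lambda>x. f (x * y))}" for j
    using smooth_fun_cmult[OF smooth_fun_partial[OF f, of j], of "of_real (y $ j)"]
    by (auto simp: h partial_dilation smooth_fun_axis_differentiable[OF f])
  ultimately show "continuous_on UNIV h \<and> axis_differentiable h \<and>
      (\<forall>j. partial j h \<in> {h. \<exists>f. smooth_fun f \<and> h = (\<lambda>x. f (x * y))})"
    by blast
qed (use assms in blast)

lemma euler_t_dilation:
  assumes "smooth_fun f"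
  shows "euler_t j (\<lambda>x. f (x * y)) = (\<lambda>x. euler_t j f (x * y))"
  using assms
  by (simp add: euler_t_eq smooth_fun_axis_differentiable smooth_fun_dilation partial_dilation
      fun_eq_iff algebra_simps)

lemma foldr_euler_t_dilation:
  assumes "smooth_fun f"
  shows "foldr euler_t js (\<lambda>x. f (x * y)) = (\<lambda>x. foldr euler_t js f (x * y))"
proof (induction js)
  case (Cons j js)
  then have "foldr euler_t (j # js) (\<lambda>x. f (x * y)) = euler_t j (\<lambda>x. foldr euler_t js f (x * y))"
    by simp
  also have "\<dots> = (\<lambda>x. euler_t j (foldr euler_t js f) (x * y))"
    by (rule euler_t_dilation[OF smooth_fun_foldr_euler_t[OF assms]])
  finally show ?case
    by simp
qed simp

lemma euler_transpose_dilation: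
  "smooth_fun f \<Longrightarrow> euler_transpose js (\<lambda>x. f (x * y)) = (\<lambda>x. euler_transpose js f (x * y))"
  unfolding euler_transpose_def by (rule foldr_euler_t_dilation)

lemma test_fun_iff: "test_fun f \<longleftrightarrow> smooth_fun f \<and> bounded {x. f x \<noteq> 0}"
  unfolding test_fun_def by simp

lemma partial_eq_0_outside_support:
  assumes "x \<notin> closure {z. f z \<noteq> 0}"
  shows "partial j f x = 0"
proof (rule partial_eqI)
  define S where "S = (\<lambda>t. x + t *\<^sub>R axis j 1) -` (- closure {z. f z \<noteq> 0})"
  have "open S"
    unfolding S_def by (rule continuous_open_vimage) (auto intro: continuous_intros)
  moreover have "0 \<in> S"
    using assms by (simp add: S_def)
  moreover have "0 = f (x + t *\<^sub>R axis j 1)" if "t \<in> S" for t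
    using that closure_subset[of "{z. f z \<noteq> 0}"] by (auto simp: S_def)
  ultimately show "((\<lambda>t. f (x + t *\<^sub>R axis j 1)) has_vector_derivative 0) (at 0)"
    by (rule has_vector_derivative_transform_within_open[OF has_vector_derivative_const])
qed

lemma bounded_support_if_vanishing_off_closure:
  assumes "bounded {x. f x \<noteq> 0}" "\<And>x. x \<notin> closure {z. f z \<noteq> 0} \<Longrightarrow> g x = 0"
  shows "bounded {x. g x \<noteq> 0}"
  by (rule bounded_subset[OF bounded_closure[OF assms(1)]]) (use assms(2) in blast)

lemma test_fun_partial: "test_fun f \<Longrightarrow> test_fun (partial j f)"
  unfolding test_fun_iff
  using smooth_fun_partial bounded_support_if_vanishing_off_closure partial_eq_0_outside_support
  by blast

lemma test_fun_euler_t: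
  assumes "test_fun f"
  shows "test_fun (euler_t j f)"
proof -
  have f: "smooth_fun f" "bounded {x. f x \<noteq> 0}"
    using assms test_fun_iff by auto
  have "euler_t j f x = 0" if "x \<notin> closure {z. f z \<noteq> 0}" for x
  proof -
    have "f x = 0"
      using that closure_subset[of "{z. f z \<noteq> 0}"] by auto
    then show ?thesis
      using partial_eq_0_outside_support[OF that]
      by (simp add: euler_t_eq[OF smooth_fun_axis_differentiable[OF f(1)]])
  qed
  then show ?thesis
    unfolding test_fun_iff
    using smooth_fun_euler_t[OF f(1)] bounded_support_if_vanishing_off_closure[OF f(2)] by blast
qed

lemma test_fun_foldr_euler_t: "test_fun f \<Longrightarrow> test_fun (foldr euler_t js f)"
  by (induction js) (simp_all add: test_fun_euler_t)

lemma test_fun_euler_transpose: "test_fun f \<Longrightarrow> test_fun (euler_transpose js f)"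
  unfolding euler_transpose_def by (rule test_fun_foldr_euler_t)

lemma test_fun_dilation:
  assumes "test_fun f" "\<forall>i. y $ i \<noteq> 0"
  shows "test_fun (\<lambda>x. f (x * y))"
proof -
  have f: "smooth_fun f" "bounded {x. f x \<noteq> 0}"
    using assms test_fun_iff by auto
  define y' :: "real^'a" where "y' = (\<chi> i. 1 / y $ i)"
  have "{x. f (x * y) \<noteq> 0} \<subseteq> (\<lambda>z. z * y') ` closure {x. f x \<noteq> 0}"
  proof
    fix x assume "x \<in> {x. f (x * y) \<noteq> 0}"
    moreover have "x = x * y * y'"
      using assms(2) by (simp add: vec_eq_iff y'_def)
    ultimately show "x \<in> (\<lambda>z. z * y') ` closure {x. f x \<noteq> 0}"
      by (intro image_eqI[of _ _ "x * y"]) (auto intro: closure_subset[THEN subsetD])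
  qed
  moreover have "compact ((\<lambda>z. z * y') ` closure {x. f x \<noteq> 0})"
    using f(2) continuous_on_subset[OF continuous_on_vec_mult_right]
    by (intro compact_continuous_image) auto
  ultimately have "bounded {x. f (x * y) \<noteq> 0}"
    by (metis bounded_subset compact_imp_bounded)
  then show ?thesis
    unfolding test_fun_iff using smooth_fun_dilation[OF f(1)] by blast
qed

lemma test_fun_bounded:
  assumes "test_fun f"
  obtains B where "\<And>x. cmod (f x) \<le> B"
proof -
  have f: "continuous_on UNIV f" "compact (closure {x. f x \<noteq> 0})"
    using assms by (simp_all add: test_fun_def smooth_fun_continuous)
  then have "bounded (f ` closure {x. f x \<noteq> 0})"
    by (intro compact_imp_bounded compact_continuous_image continuous_on_subset[OF f(1)]) auto
  then obtain B where B: "\<And>z. z \<in> f ` closure {x. f x \<noteq> 0} \<Longrightarrow> norm z \<le> B"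
    by (auto simp: bounded_iff)
  have "cmod (f x) \<le> max B 0" for x
    using B[of "f x"] closure_subset[of "{x. f x \<noteq> 0}"]
    by (cases "f x = 0") auto
  then show ?thesis using that by blast
qed

lemma continuous_imp_lebesgue_measurable:
  "continuous_on UNIV f \<Longrightarrow> f \<in> borel_measurable lebesgue"
  by (intro measurable_completion) (simp add: borel_measurable_continuous_onI)

lemma test_fun_dilation_measurable:
  assumes "test_fun f"
  shows "(\<lambda>x. f (x * y)) \<in> borel_measurable lebesgue"
proof -
  have "continuous_on UNIV f"
    using assms by (simp add: test_fun_def smooth_fun_continuous)
  then have "continuous_on UNIV (\<lambda>x. f (x * y))"
    by (rule continuous_on_compose2[OF _ continuous_on_vec_mult_right]) simp
  then show ?thesis
    by (rule continuous_imp_lebesgue_measurable)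
qed

section \<open>Weights of polynomial decay\<close>

definition decays :: "('a::euclidean_space \<Rightarrow> complex) \<Rightarrow> real \<Rightarrow> bool" where
  "decays w s \<longleftrightarrow> w \<in> borel_measurable lebesgue \<and>
     (\<exists>C. AE x in lebesgue. (1 + (norm x)\<^sup>2) powr (s / 2) * cmod (w x) \<le> C)"

lemma integrable_prod_inverse_1_plus_square:
  "integrable lebesgue (\<lambda>x::'a::euclidean_space. \<Prod>b\<in>Basis. inverse (1 + (x \<bullet> b)\<^sup>2))"
proof -
  let ?\<rho> = "\<lambda>x::'a. \<Prod>b\<in>Basis. inverse (1 + (x \<bullet> b)\<^sup>2)"
  have cont: "continuous_on UNIV ?\<rho>"
    by (intro continuous_intros) (smt (verit) zero_le_power2)
  have "(\<integral>\<^sup>+t. ennreal (inverse (1 + t\<^sup>2)) \<partial>lborel) < \<infinity>"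
    using integrable_inverse_1_plus_square
    by (simp add: set_integrable_def einterval_eq_UNIV integrable_iff_bounded
        add_pos_nonneg abs_of_nonneg)
  have e: "ennreal (?\<rho> x) = (\<Prod>b\<in>Basis. ennreal (inverse (1 + (x \<bullet> b)\<^sup>2)))" for x
    by (rule prod_ennreal[symmetric]) (smt (verit) zero_le_power2 inverse_nonnegative_iff_nonnegative)
  have "(\<integral>\<^sup>+x. ennreal (?\<rho> x) \<partial>lborel) =
      (\<integral>\<^sup>+x. (\<Prod>b\<in>Basis. ennreal (inverse (1 + ((x::'a) \<bullet> b)\<^sup>2))) \<partial>lborel)"
    unfolding e ..
  also have "\<dots> = (\<Prod>b\<in>(Basis::'a set). \<integral>\<^sup>+t. ennreal (inverse (1 + t\<^sup>2)) \<partial>lborel)"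
    by (rule nn_integral_lborel_prod) auto
  finally have "(\<integral>\<^sup>+x. ennreal (?\<rho> x) \<partial>lborel) < \<infinity>"
    using \<open>(\<integral>\<^sup>+t. ennreal (inverse (1 + t\<^sup>2)) \<partial>lborel) < \<infinity>\<close>
    by (simp add: power_less_top_ennreal)
  then have "integrable lborel ?\<rho>"
    using cont by (intro integrableI_nonneg) (auto simp: borel_measurable_continuous_onI add_pos_nonneg prod_nonneg)
  then show ?thesis
    using cont by (subst integrable_completion) (auto simp: borel_measurable_continuous_onI)
qed

lemma prod_1_plus_square_le_powr:
  fixes x :: "'a::euclidean_space"
  assumes "s \<ge> 2 * real DIM('a)"
  shows "(\<Prod>b\<in>Basis. 1 + (x \<bullet> b)\<^sup>2) \<le> (1 + (norm x)\<^sup>2) powr (s / 2)"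
proof -
  have "(\<Prod>b\<in>Basis. 1 + (x \<bullet> b)\<^sup>2) \<le> (\<Prod>b\<in>(Basis::'a set). 1 + (norm x)\<^sup>2)"
  proof (rule prod_mono)
    fix b :: 'a assume "b \<in> Basis"
    then have "\<bar>x \<bullet> b\<bar> \<le> norm x" by (rule Basis_le_norm)
    then have "(x \<bullet> b)\<^sup>2 \<le> (norm x)\<^sup>2"
      by (metis abs_ge_zero power2_abs power_mono)
    then show "0 \<le> 1 + (x \<bullet> b)\<^sup>2 \<and> 1 + (x \<bullet> b)\<^sup>2 \<le> 1 + (norm x)\<^sup>2"
      by simp
  qed
  also have "\<dots> = (1 + (norm x)\<^sup>2) powr (real DIM('a))"
    by (simp add: powr_realpow add_pos_nonneg)
  also have "\<dots> \<le> (1 + (norm x)\<^sup>2) powr (s / 2)"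
    by (rule powr_mono) (use assms in auto)
  finally show ?thesis .
qed

lemma decays_le_prod_inverse_1_plus_square:
  fixes w :: "'a::euclidean_space \<Rightarrow> complex"
  assumes "decays w s" "s \<ge> 2 * real DIM('a)"
  obtains C where "AE x in lebesgue. cmod (w x) \<le> C * (\<Prod>b\<in>Basis. inverse (1 + (x \<bullet> b)\<^sup>2))"
proof -
  obtain C where C: "AE x in lebesgue. (1 + (norm x)\<^sup>2) powr (s / 2) * cmod (w x) \<le> C"
    using assms(1) unfolding decays_def by blast
  have "AE x in lebesgue. cmod (w x) \<le> C * (\<Prod>b\<in>Basis. inverse (1 + (x \<bullet> b)\<^sup>2))"
    using C
  proof eventually_elim
    case (elim x)
    let ?P = "\<Prod>b\<in>(Basis::'a set). 1 + (x \<bullet> b)\<^sup>2"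
    let ?Q = "(1 + (norm x)\<^sup>2) powr (s / 2)"
    have P: "0 < ?P" "?P \<le> ?Q"
      using prod_1_plus_square_le_powr[OF assms(2)] by (auto intro!: prod_pos add_pos_nonneg)
    then have Q: "0 < ?Q"
      by linarith
    then have "0 \<le> C"
      using elim by (smt (verit) mult_nonneg_nonneg norm_ge_zero)
    have "cmod (w x) \<le> C / ?Q"
      using elim Q by (simp add: pos_le_divide_eq mult.commute)
    also have "\<dots> \<le> C / ?P"
      using P Q \<open>0 \<le> C\<close> by (intro divide_left_mono) (auto intro: mult_pos_pos)
    finally show ?case
      by (simp add: prod_inversef[symmetric] divide_inverse)
  qed
  then show ?thesis
    using that by blast
qed

lemma decays_integrable:
  fixes w :: "'a::euclidean_space \<Rightarrow> complex"
  assumes "decays w s" "s \<ge> 2 * real DIM('a)"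
  shows "integrable lebesgue w"
proof -
  obtain C where "AE x in lebesgue. cmod (w x) \<le> C * (\<Prod>b\<in>Basis. inverse (1 + (x \<bullet> b)\<^sup>2))"
    using decays_le_prod_inverse_1_plus_square[OF assms] by blast
  then have "AE x in lebesgue. norm (w x) \<le> norm (C * (\<Prod>b\<in>Basis. inverse (1 + (x \<bullet> b)\<^sup>2)))"
    by eventually_elim (simp only: real_norm_def abs_ge_self order_trans)
  moreover have "integrable lebesgue (\<lambda>x. C * (\<Prod>b\<in>(Basis::'a set). inverse (1 + (x \<bullet> b)\<^sup>2)))"
    by (rule integrable_mult_right) (rule integrable_prod_inverse_1_plus_square)
  moreover have "w \<in> borel_measurable lebesgue"
    using assms(1) by (simp add: decays_def)
  ultimately show ?thesis
    using Bochner_Integration.integrable_bound by blast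
qed

lemma decays_coord_mult:
  fixes w :: "real^'d::finite \<Rightarrow> complex"
  assumes "decays w s"
  shows "decays (\<lambda>x. of_real (x $ j) * w x) (s - 1)"
proof -
  obtain C where C: "AE x in lebesgue. (1 + (norm x)\<^sup>2) powr (s / 2) * cmod (w x) \<le> C"
    using assms unfolding decays_def by blast
  have "AE x in lebesgue. (1 + (norm x)\<^sup>2) powr ((s - 1) / 2) * cmod (of_real (x $ j) * w x) \<le> C"
    using C
  proof eventually_elim
    case (elim x)
    let ?N = "1 + (norm x)\<^sup>2"
    have "\<bar>x $ j\<bar> \<le> sqrt ((norm x)\<^sup>2)"
      by (simp add: component_le_norm_cart)
    also have "\<dots> \<le> sqrt ?N"
      by (rule real_sqrt_le_mono) simp
    also have "\<dots> = ?N powr (1/2)"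
      by (simp add: powr_half_sqrt add_pos_nonneg)
    finally have xj: "\<bar>x $ j\<bar> \<le> ?N powr (1/2)" .
    have "?N powr ((s - 1) / 2) * cmod (of_real (x $ j) * w x) =
        ?N powr ((s - 1) / 2) * (\<bar>x $ j\<bar> * cmod (w x))"
      by (simp add: norm_mult)
    also have "\<dots> \<le> ?N powr ((s - 1) / 2) * (?N powr (1/2) * cmod (w x))"
      by (intro mult_left_mono mult_right_mono xj) auto
    also have "\<dots> = (?N powr ((s - 1) / 2) * ?N powr (1/2)) * cmod (w x)"
      by simp
    also have "?N powr ((s - 1) / 2) * ?N powr (1/2) = ?N powr (s / 2)"
      by (simp add: powr_add[symmetric] diff_divide_distrib)
    finally show ?case using elim by linarith
  qed
  moreover have "(\<lambda>x. of_real (x $ j) * w x) \<in> borel_measurable lebesgue"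
  proof -
    have [measurable]: "w \<in> borel_measurable lebesgue"
      using assms by (simp add: decays_def)
    have [measurable]: "(\<lambda>x::real^'d. x $ j) \<in> borel_measurable lebesgue"
      by (intro continuous_imp_lebesgue_measurable continuous_intros)
    show ?thesis by measurable
  qed
  ultimately show ?thesis
    unfolding decays_def by blast
qed

section \<open>Integrals of dilated test functions against decaying weights\<close>

definition dilation_integral ::
    "(real^'d::finite \<Rightarrow> complex) \<Rightarrow> (real^'d \<Rightarrow> complex) \<Rightarrow> real^'d \<Rightarrow> complex" where
  "dilation_integral w \<psi> y = (LINT x|lebesgue. w x * \<psi> (x * y))"

lemma integrable_mult_bounded:
  fixes w g :: "'a \<Rightarrow> complex"
  assumes "integrable M w" "g \<in> borel_measurable M" "\<And>x. cmod (g x) \<le> B"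
  shows "integrable M (\<lambda>x. w x * g x)"
proof (rule Bochner_Integration.integrable_bound[OF integrable_mult_right[OF integrable_norm[OF assms(1)]]])
  show "(\<lambda>x. w x * g x) \<in> borel_measurable M"
    using assms(1,2) by measurable
  show "AE x in M. norm (w x * g x) \<le> norm (B * norm (w x))"
  proof (rule AE_I2)
    fix x
    have "norm (w x * g x) \<le> norm (w x) * B"
      using assms(3)[of x] by (simp add: norm_mult mult_left_mono)
    then show "norm (w x * g x) \<le> norm (B * norm (w x))"
      by (simp add: mult.commute)
  qed
qed

lemma integrable_dilation_integrand:
  assumes "decays w s" "s \<ge> 2 * real CARD('d::finite)" "test_fun (\<psi> :: real^'d \<Rightarrow> complex)"
  shows "integrable lebesgue (\<lambda>x. w x * \<psi> (x * y))"
proof -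
  obtain B where B: "\<And>x. cmod (\<psi> x) \<le> B"
    using test_fun_bounded[OF assms(3)] by blast
  have "integrable lebesgue w"
    using decays_integrable[OF assms(1)] assms(2) by simp
  then show ?thesis
    by (rule integrable_mult_bounded[OF _ test_fun_dilation_measurable[OF assms(3)] B])
qed

lemma continuous_on_dilation_integral:
  fixes w :: "real^'d::finite \<Rightarrow> complex"
  assumes w: "decays w s" "s \<ge> 2 * real CARD('d)" and \<psi>: "test_fun \<psi>"
  shows "continuous_on UNIV (dilation_integral w \<psi>)"
proof (rule continuous_on_sequentiallyI)
  fix u a assume u: "u \<longlonglongrightarrow> (a::real^'d)"
  obtain B where B: "\<And>x. cmod (\<psi> x) \<le> B"
    using test_fun_bounded[OF \<psi>] by blast
  have "continuous_on UNIV \<psi>"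
    using \<psi> by (simp add: test_fun_def smooth_fun_continuous)
  show "(\<lambda>n. dilation_integral w \<psi> (u n)) \<longlonglongrightarrow> dilation_integral w \<psi> a"
    unfolding dilation_integral_def
  proof (rule integral_dominated_convergence[where w = "\<lambda>x. B * cmod (w x)"])
    show "integrable lebesgue (\<lambda>x. B * cmod (w x))"
      using decays_integrable[OF w(1)] w(2) by simp
    show "(\<lambda>x. w x * \<psi> (x * a)) \<in> borel_measurable lebesgue"
      and "(\<lambda>x. w x * \<psi> (x * u n)) \<in> borel_measurable lebesgue" for n
      by (rule borel_measurable_integrable[OF integrable_dilation_integrand[OF w \<psi>]])+
    show "AE x in lebesgue. (\<lambda>n. w x * \<psi> (x * u n)) \<longlonglongrightarrow> w x * \<psi> (x * a)"
    proof (rule AE_I2)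
      fix x :: "real^'d"
      have "(\<lambda>n. u n * x) \<longlonglongrightarrow> a * x"
        using continuous_on_tendsto_compose[OF continuous_on_vec_mult_right u] by simp
      then have "(\<lambda>n. \<psi> (x * u n)) \<longlonglongrightarrow> \<psi> (x * a)"
        using continuous_on_tendsto_compose[OF \<open>continuous_on UNIV \<psi>\<close>] by (simp add: mult.commute)
      then show "(\<lambda>n. w x * \<psi> (x * u n)) \<longlonglongrightarrow> w x * \<psi> (x * a)"
        by (rule tendsto_mult_left)
    qed
    show "AE x in lebesgue. norm (w x * \<psi> (x * u n)) \<le> B * cmod (w x)" for n
      using mult_left_mono[OF B norm_ge_zero] by (intro AE_I2) (simp add: norm_mult mult.commute)
  qed
qed

lemma has_vector_derivative_integral_dominated:
  fixes f :: "real \<Rightarrow> 'a \<Rightarrow> 'b::{banach, second_countable_topology}"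
  assumes integrable: "\<And>t. integrable M (f t)"
    and measurable: "f' \<in> borel_measurable M"
    and derivative: "AE x in M. ((\<lambda>t. f t x) has_vector_derivative f' x) (at 0)"
    and dominating: "integrable M g"
    and bound: "\<And>t. t \<noteq> 0 \<Longrightarrow> AE x in M. norm ((f t x - f 0 x) /\<^sub>R t) \<le> g x"
  shows "((\<lambda>t. integral\<^sup>L M (f t)) has_vector_derivative integral\<^sup>L M f') (at 0)"
  unfolding has_vector_derivative_iff_difference_quotient tendsto_at_iff_sequentially
proof (intro allI impI)
  fix X :: "nat \<Rightarrow> real" assume X: "\<forall>n. X n \<in> UNIV - {0}" "X \<longlonglongrightarrow> 0"
  have "(\<lambda>n. integral\<^sup>L M (\<lambda>x. (f (X n) x - f 0 x) /\<^sub>R X n)) \<longlonglongrightarrow> integral\<^sup>L M f'"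
  proof (rule integral_dominated_convergence[OF measurable _ dominating])
    show "(\<lambda>x. (f (X n) x - f 0 x) /\<^sub>R X n) \<in> borel_measurable M" for n
      using integrable by (intro borel_measurable_integrable) simp
    show "AE x in M. (\<lambda>n. (f (X n) x - f 0 x) /\<^sub>R X n) \<longlonglongrightarrow> f' x"
      using derivative
    proof eventually_elim
      case (elim x)
      then have "((\<lambda>t. (f t x - f 0 x) /\<^sub>R t) \<longlongrightarrow> f' x) (at 0)"
        by (simp add: has_vector_derivative_iff_difference_quotient)
      then show ?case
        using X unfolding tendsto_at_iff_sequentially o_def by blast
    qed
    show "AE x in M. norm ((f (X n) x - f 0 x) /\<^sub>R X n) \<le> g x" for n
      using X(1) bound by simp
  qed
  moreover have "integral\<^sup>L M (\<lambda>x. f t x - f 0 x) = integral\<^sup>L M (f t) - integral\<^sup>L M (f 0)" for t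
    by (rule Bochner_Integration.integral_diff[OF integrable integrable])
  ultimately show "((\<lambda>t. (integral\<^sup>L M (f t) - integral\<^sup>L M (f 0)) /\<^sub>R t) \<circ> X) \<longlonglongrightarrow> integral\<^sup>L M f'"
    by (simp add: o_def)
qed

lemma has_vector_derivative_dilation_parameter:
  assumes "axis_differentiable \<psi>"
  shows "((\<lambda>t. \<psi> (x * (y + t *\<^sub>R axis j 1))) has_vector_derivative
           of_real (x $ j) * partial j \<psi> (x * y)) (at 0)"
proof -
  have commute: "x * (y + t *\<^sub>R axis j 1) = (y + t *\<^sub>R axis j 1) * x" "x * y = y * x" for t
    by (rule mult.commute)+
  show ?thesis
    unfolding commute by (rule has_vector_derivative_dilation[OF assms])
qed

lemma norm_dilation_increment_le:
  assumes "axis_differentiable \<psi>" "\<And>z. cmod (partial j \<psi> z) \<le> B"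
  shows "cmod (\<psi> (x * (y + t *\<^sub>R axis j 1)) - \<psi> (x * y)) \<le> B * \<bar>t\<bar> * \<bar>x $ j\<bar>"
proof -
  have "x * (y + t *\<^sub>R axis j 1) = x * y + (t * x $ j) *\<^sub>R axis j 1"
    by (simp add: vec_eq_iff axis_def algebra_simps)
  then show ?thesis
    using norm_axis_increment_le[OF assms, of "x * y" "t * x $ j"] by (simp add: abs_mult mult.assoc)
qed

lemma has_vector_derivative_dilation_integral:
  fixes w :: "real^'d::finite \<Rightarrow> complex"
  assumes w: "decays w s" "s \<ge> 2 * real CARD('d) + 1" and \<psi>: "test_fun \<psi>"
  shows "((\<lambda>t. dilation_integral w \<psi> (y + t *\<^sub>R axis j 1)) has_vector_derivative
           dilation_integral (\<lambda>x. of_real (x $ j) * w x) (partial j \<psi>) y) (at 0)"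
proof -
  define wj where "wj = (\<lambda>x::real^'d. of_real (x $ j) * w x)"
  have wj: "decays wj (s - 1)" "s - 1 \<ge> 2 * real CARD('d)"
    using decays_coord_mult[OF w(1)] w(2) by (simp_all add: wj_def)
  have \<psi>': "axis_differentiable \<psi>"
    using \<psi> by (simp add: test_fun_iff smooth_fun_axis_differentiable)
  obtain B where B: "\<And>z. cmod (partial j \<psi> z) \<le> B"
    using test_fun_bounded[OF test_fun_partial[OF \<psi>]] by blast
  show ?thesis
    unfolding wj_def[symmetric] dilation_integral_def
  proof (rule has_vector_derivative_integral_dominated[where g = "\<lambda>x. B * cmod (wj x)"])
    show "integrable lebesgue (\<lambda>x. w x * \<psi> (x * (y + t *\<^sub>R axis j 1)))" for t
      using integrable_dilation_integrand[OF w(1) _ \<psi>] w(2) by simp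
    show "(\<lambda>x. wj x * partial j \<psi> (x * y)) \<in> borel_measurable lebesgue"
      by (rule borel_measurable_integrable[OF integrable_dilation_integrand[OF wj test_fun_partial[OF \<psi>]]])
    show "integrable lebesgue (\<lambda>x. B * cmod (wj x))"
      using decays_integrable[OF wj(1)] wj(2) by simp
    show "AE x in lebesgue. ((\<lambda>t. w x * \<psi> (x * (y + t *\<^sub>R axis j 1))) has_vector_derivative
        wj x * partial j \<psi> (x * y)) (at 0)"
    proof (rule AE_I2)
      fix x
      from has_vector_derivative_mult_right[OF has_vector_derivative_dilation_parameter[OF \<psi>'], of "w x"]
      show "((\<lambda>t. w x * \<psi> (x * (y + t *\<^sub>R axis j 1))) has_vector_derivative
          wj x * partial j \<psi> (x * y)) (at 0)"
        by (simp only: wj_def mult.assoc mult.left_commute)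
    qed
    show "AE x in lebesgue. norm ((w x * \<psi> (x * (y + t *\<^sub>R axis j 1)) -
        w x * \<psi> (x * (y + 0 *\<^sub>R axis j 1))) /\<^sub>R t) \<le> B * cmod (wj x)" if "t \<noteq> 0" for t
    proof (rule AE_I2)
      fix x
      have "norm ((w x * \<psi> (x * (y + t *\<^sub>R axis j 1)) - w x * \<psi> (x * y)) /\<^sub>R t) =
          cmod (w x) * cmod (\<psi> (x * (y + t *\<^sub>R axis j 1)) - \<psi> (x * y)) / \<bar>t\<bar>"
        by (simp add: right_diff_distrib[symmetric] norm_mult divide_inverse abs_inverse ac_simps)
      also have "\<dots> \<le> cmod (w x) * (B * \<bar>t\<bar> * \<bar>x $ j\<bar>) / \<bar>t\<bar>"
        by (intro divide_right_mono mult_left_mono norm_dilation_increment_le[OF \<psi>' B]) auto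
      also have "\<dots> = B * cmod (wj x)"
        using that by (simp add: wj_def norm_mult)
      finally show "norm ((w x * \<psi> (x * (y + t *\<^sub>R axis j 1)) -
          w x * \<psi> (x * (y + 0 *\<^sub>R axis j 1))) /\<^sub>R t) \<le> B * cmod (wj x)"
        by simp
    qed
  qed
qed

fun dilation_integral_sum ::
    "((real^'d::finite \<Rightarrow> complex) \<times> (real^'d \<Rightarrow> complex)) list \<Rightarrow> real^'d \<Rightarrow> complex" where
  "dilation_integral_sum [] y = 0"
| "dilation_integral_sum ((w, \<psi>) # L) y = dilation_integral w \<psi> y + dilation_integral_sum L y"

fun admissible_terms :: "((real^'d::finite \<Rightarrow> complex) \<times> (real^'d \<Rightarrow> complex)) list \<Rightarrow> real \<Rightarrow> bool" where
  "admissible_terms [] s \<longleftrightarrow> True"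
| "admissible_terms ((w, \<psi>) # L) s \<longleftrightarrow> decays w s \<and> test_fun \<psi> \<and> admissible_terms L s"

lemma admissible_terms_iff: "admissible_terms L s \<longleftrightarrow> (\<forall>(w, \<psi>) \<in> set L. decays w s \<and> test_fun \<psi>)"
  by (induction L s rule: admissible_terms.induct) auto

fun partial_terms ::
    "((real^'d::finite \<Rightarrow> complex) \<times> (real^'d \<Rightarrow> complex)) list \<Rightarrow> 'd \<Rightarrow>
      ((real^'d \<Rightarrow> complex) \<times> (real^'d \<Rightarrow> complex)) list" where
  "partial_terms [] j = []"
| "partial_terms ((w, \<psi>) # L) j = (\<lambda>x. of_real (x $ j) * w x, partial j \<psi>) # partial_terms L j"

lemma admissible_terms_partial_terms: "admissible_terms L s \<Longrightarrow> admissible_terms (partial_terms L j) (s - 1)"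
  by (induction L j rule: partial_terms.induct) (simp_all add: decays_coord_mult test_fun_partial)

lemma continuous_on_dilation_integral_sum:
  assumes "admissible_terms L s" "s \<ge> 2 * real CARD('d::finite)"
  shows "continuous_on UNIV (dilation_integral_sum L :: real^'d \<Rightarrow> complex)"
  using assms(1)
proof (induction L)
  case (Cons a L)
  then show ?case
    by (cases a) (auto intro!: continuous_on_add continuous_on_dilation_integral[OF _ assms(2)])
qed simp

lemma partial_dilation_integral_sum:
  assumes "admissible_terms L s" "s \<ge> 2 * real CARD('d::finite) + 1"
  shows "partial j (dilation_integral_sum L) = dilation_integral_sum (partial_terms L j :: (_ \<times> (real^'d \<Rightarrow> _)) list)"
    and "axis_differentiable (dilation_integral_sum L)"
proof -
  have "((\<lambda>t. dilation_integral_sum L (y + t *\<^sub>R axis j 1)) has_vector_derivative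
          dilation_integral_sum (partial_terms L j) y) (at 0)" for y :: "real^'d" and j
    using assms(1)
  proof (induction L)
    case (Cons a L)
    then show ?case
      by (cases a) (auto intro!: has_vector_derivative_add has_vector_derivative_dilation_integral[OF _ assms(2)])
  qed simp
  then show "partial j (dilation_integral_sum L) = dilation_integral_sum (partial_terms L j)"
    and "axis_differentiable (dilation_integral_sum L)"
    by (auto simp: axis_differentiable_def intro!: partial_eqI differentiableI_vector)
qed

lemma pderivs_dilation_integral_sum:
  assumes "admissible_terms L s" "s \<ge> 2 * real CARD('d::finite) + real (length js)"
  shows "\<exists>L'. pderivs js (dilation_integral_sum L :: real^'d \<Rightarrow> complex) = dilation_integral_sum L'
    \<and> admissible_terms L' (s - real (length js))"
  using assms(2)
proof (induction js)
  case Nil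
  then show ?case using assms(1) by auto
next
  case (Cons j js)
  then obtain L' where L': "pderivs js (dilation_integral_sum L :: real^'d \<Rightarrow> complex) = dilation_integral_sum L'"
      "admissible_terms L' (s - real (length js))"
    by auto
  then have "pderivs (j # js) (dilation_integral_sum L :: real^'d \<Rightarrow> complex) =
      dilation_integral_sum (partial_terms L' j)"
    using Cons.prems by (simp add: pderivs_Cons partial_dilation_integral_sum)
  moreover have "admissible_terms (partial_terms L' j) (s - real (length (j # js)))"
    using admissible_terms_partial_terms[OF L'(2)] by (simp add: algebra_simps)
  ultimately show ?case by blast
qed

lemma continuous_eq_if_eq_on_nonzero_coords:
  fixes f g :: "real^'d::finite \<Rightarrow> complex"
  assumes "continuous_on UNIV f" "continuous_on UNIV g" "\<And>y. \<forall>i. y $ i \<noteq> 0 \<Longrightarrow> f y = g y"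
  shows "f = g"
proof
  fix y :: "real^'d"
  define u where "u = (\<lambda>n::nat. \<chi> i. if y $ i = 0 then 1 / (real n + 1) else y $ i)"
  have "u \<longlonglongrightarrow> y"
  proof (rule vec_tendstoI)
    fix i
    show "(\<lambda>n. u n $ i) \<longlonglongrightarrow> y $ i"
      using LIMSEQ_inverse_real_of_nat
      by (cases "y $ i = 0") (simp_all add: u_def inverse_eq_divide add.commute)
  qed
  then have "(\<lambda>n. f (u n)) \<longlonglongrightarrow> f y" "(\<lambda>n. g (u n)) \<longlonglongrightarrow> g y"
    using assms(1,2) continuous_on_tendsto_compose by fastforce+
  moreover have "f (u n) = g (u n)" for n
    by (rule assms(3)) (simp add: u_def)
  ultimately show "f y = g y"
    using LIMSEQ_unique by auto
qed

text \<open>The sums for different k are continuous as soon as k \<ge> 2d and agree on R_*^d, hence they are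
  all equal; derivatives of order n are then read off from the sum with k = 2d + 1 + n.\<close>
lemma smooth_extension_from_dilation_integral_sums:
  assumes admissible: "\<And>k. admissible_terms (L k) (real k)"
    and agree: "\<And>k y. \<forall>i. y $ i \<noteq> 0 \<Longrightarrow> dilation_integral_sum (L k) y = (g y :: complex)"
  shows "\<exists>G. smooth_fun G \<and> (\<forall>y::real^'d::finite. (\<forall>i. y $ i \<noteq> 0) \<longrightarrow> G y = g y)"
proof (intro exI conjI allI impI)
  define k0 where "k0 = 2 * CARD('d) + 1"
  have same: "dilation_integral_sum (L k) = dilation_integral_sum (L k0)" if "k \<ge> k0" for k
    using that agree admissible
    by (intro continuous_eq_if_eq_on_nonzero_coords continuous_on_dilation_integral_sum)
       (auto simp: k0_def)
  show "smooth_fun (dilation_integral_sum (L k0))"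
    unfolding smooth_fun_def
  proof
    fix js :: "'d list"
    obtain L' where L': "pderivs js (dilation_integral_sum (L (k0 + length js))) = dilation_integral_sum L'"
        "admissible_terms L' (real k0)"
      using pderivs_dilation_integral_sum[OF admissible[of "k0 + length js"], of js]
      by (auto simp: k0_def)
    show "continuous_on UNIV (pderivs js (dilation_integral_sum (L k0))) \<and>
        (\<forall>j x. (\<lambda>t::real. pderivs js (dilation_integral_sum (L k0)) (x + t *\<^sub>R axis j 1)) differentiable (at 0))"
      using same[of "k0 + length js"] L' continuous_on_dilation_integral_sum[OF L'(2)]
        partial_dilation_integral_sum(2)[OF L'(2)]
      by (auto simp: k0_def axis_differentiable_def)
  qed
  show "dilation_integral_sum (L k0) y = g y" if "\<forall>i. y $ i \<noteq> 0" for y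
    using agree[OF that] .
qed

lemma OH'_representations:
  assumes "OH' T"
  obtains ts where "\<And>k. \<forall>(js, t) \<in> set (ts k). decays t (real k)"
    and "\<And>k \<psi>. test_fun \<psi> \<Longrightarrow> T \<psi> = (\<Sum>(js, t) \<leftarrow> ts k. LINT x|lebesgue. t x * euler_transpose js \<psi> x)"
proof -
  have "\<forall>k. \<exists>ts. (\<forall>(js, t) \<in> set ts. decays t (real k)) \<and>
      (\<forall>\<psi>. test_fun \<psi> \<longrightarrow> T \<psi> = (\<Sum>(js, t) \<leftarrow> ts. LINT x|lebesgue. t x * euler_transpose js \<psi> x))"
    using assms unfolding OH'_def decays_def by blast
  from choice[OF this] obtain ts where "\<forall>k. (\<forall>(js, t) \<in> set (ts k). decays t (real k)) \<and>
      (\<forall>\<psi>. test_fun \<psi> \<longrightarrow> T \<psi> = (\<Sum>(js, t) \<leftarrow> ts k. LINT x|lebesgue. t x * euler_transpose js \<psi> x))"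
    by blast
  then show ?thesis
    using that by blast
qed

lemma sum_integrals_euler_transpose_dilation:
  assumes "smooth_fun \<phi>"
  shows "(\<Sum>(js, t) \<leftarrow> ts. LINT x|lebesgue. t x * euler_transpose js (\<lambda>x. \<phi> (x * y)) x)
       = dilation_integral_sum (map (\<lambda>(js, t). (t, euler_transpose js \<phi>)) ts) y"
  by (induction ts) (auto simp: euler_transpose_dilation[OF assms] dilation_integral_def)

theorem proposition1:
  fixes T :: "(real^'d::finite \<Rightarrow> complex) \<Rightarrow> complex"
    and \<phi> :: "real^'d \<Rightarrow> complex"
  assumes "OH' T"
    and "test_fun \<phi>"
  shows "\<exists>g. smooth_fun g \<and> (\<forall>y::real^'d. (\<forall>i. y $ i \<noteq> 0) \<longrightarrow> g y = T (\<lambda>x. \<phi> (x * y)))"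
proof -
  obtain ts where decays: "\<And>k. \<forall>(js, t) \<in> set (ts k). decays t (real k)"
    and repr: "\<And>k \<psi>. test_fun \<psi> \<Longrightarrow>
        T \<psi> = (\<Sum>(js, t) \<leftarrow> ts k. LINT x|lebesgue. t x * euler_transpose js \<psi> x)"
    using OH'_representations[OF assms(1)] by blast
  define L where "L k = map (\<lambda>(js, t). (t, euler_transpose js \<phi>)) (ts k)" for k
  have "admissible_terms (L k) (real k)" for k
    using decays test_fun_euler_transpose[OF assms(2)] by (auto simp: L_def admissible_terms_iff)
  moreover have "dilation_integral_sum (L k) y = T (\<lambda>x. \<phi> (x * y))" if "\<forall>i. y $ i \<noteq> 0" for k y
    using repr[OF test_fun_dilation[OF assms(2) that]] assms(2)
    by (simp add: L_def test_fun_iff sum_integrals_euler_transpose_dilation)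
  ultimately show ?thesis
    by (rule smooth_extension_from_dilation_integral_sums)
qed

end
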